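(* Let $\mathcal M$ be a Polish metric structure and $\mathcal N$ a countable approximating substructure of $\mathcal M$. For every open $U\subseteq\mathrm{Aut}(\mathcal M)$, the set $U\cap\mathrm{Aut}(\mathcal N)$ is open in $\mathrm{Aut}(\mathcal N)$.
   Context: A metric structure $\mathcal M$ is a complete bounded metric space $(M,d)$ with a family of uniformly continuous bounded predicates $P_i\colon M^{k_i}\to\mathbb R$ (including $d$) and uniformly continuous functions $f_j\colon M^{\ell_j}\to M$; it is Polish if $M$ is separable. Automorphisms are bijections preserving all predicates and functions; $\mathrm{Aut}(\mathcal M)$ carries the topology of pointwise convergence on $(M,d)$. A countable (classical) structure $\mathcal N$ is a countable approximating substructure of $\mathcal M$ if its universe $N$ is a countable dense subset of $(M,d)$, every automorphism of $\mathcal N$ extends to an automorphism of $\mathcal M$, and (via this extension) $\mathrm{Aut}(\mathcal N)$ is dense in $\mathrm{Aut}(\mathcal M)$. $\mathrm{Aut}(\mathcal N)$ carries the topology of pointwise convergence on the discrete set $N$, and is regarded as a subset of $\mathrm{Aut}(\mathcal M)$ via the extension. *)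

theory Defs
  imports "HOL-Analysis.Analysis"
begin

definition tuples :: "'a set \<Rightarrow> nat \<Rightarrow> 'a list set" where
  "tuples M k = {xs. length xs = k \<and> set xs \<subseteq> M}"

definition ucont_on_tuples :: "'a::metric_space set \<Rightarrow> nat \<Rightarrow> ('a list \<Rightarrow> 'b::metric_space) \<Rightarrow> bool" where
  "ucont_on_tuples M k f \<longleftrightarrow>
     (\<forall>e>0. \<exists>d>0. \<forall>xs\<in>tuples M k. \<forall>ys\<in>tuples M k.
        (\<forall>i<k. dist (xs ! i) (ys ! i) < d) \<longrightarrow> dist (f xs) (f ys) < e)"

definition metric_structure ::
  "'a::metric_space set \<Rightarrow> ('i \<Rightarrow> nat) \<Rightarrow> ('i \<Rightarrow> 'a list \<Rightarrow> real)
    \<Rightarrow> ('j \<Rightarrow> nat) \<Rightarrow> ('j \<Rightarrow> 'a list \<Rightarrow> 'a) \<Rightarrow> bool" where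
  "metric_structure M k P l F \<longleftrightarrow>
     complete M \<and> bounded M \<and>
     (\<forall>i. ucont_on_tuples M (k i) (P i) \<and> bounded (P i ` tuples M (k i))) \<and>
     (\<exists>i. k i = 2 \<and> (\<forall>x\<in>M. \<forall>y\<in>M. P i [x, y] = dist x y)) \<and>
     (\<forall>j. ucont_on_tuples M (l j) (F j) \<and> F j ` tuples M (l j) \<subseteq> M)"

definition polish_metric_structure ::
  "'a::metric_space set \<Rightarrow> ('i \<Rightarrow> nat) \<Rightarrow> ('i \<Rightarrow> 'a list \<Rightarrow> real)
    \<Rightarrow> ('j \<Rightarrow> nat) \<Rightarrow> ('j \<Rightarrow> 'a list \<Rightarrow> 'a) \<Rightarrow> bool" where
  "polish_metric_structure M k P l F \<longleftrightarrow>
     metric_structure M k P l F \<and> (\<exists>C. countable C \<and> C \<subseteq> M \<and> M \<subseteq> closure C)"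

definition metric_aut ::
  "'a::metric_space set \<Rightarrow> ('i \<Rightarrow> nat) \<Rightarrow> ('i \<Rightarrow> 'a list \<Rightarrow> real)
    \<Rightarrow> ('j \<Rightarrow> nat) \<Rightarrow> ('j \<Rightarrow> 'a list \<Rightarrow> 'a) \<Rightarrow> ('a \<Rightarrow> 'a) set" where
  "metric_aut M k P l F =
     {g \<in> M \<rightarrow>\<^sub>E M. bij_betw g M M \<and>
        (\<forall>i. \<forall>xs\<in>tuples M (k i). P i (map g xs) = P i xs) \<and>
        (\<forall>j. \<forall>xs\<in>tuples M (l j). g (F j xs) = F j (map g xs))}"

definition metric_aut_top ::
  "'a::metric_space set \<Rightarrow> ('i \<Rightarrow> nat) \<Rightarrow> ('i \<Rightarrow> 'a list \<Rightarrow> real)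
    \<Rightarrow> ('j \<Rightarrow> nat) \<Rightarrow> ('j \<Rightarrow> 'a list \<Rightarrow> 'a) \<Rightarrow> ('a \<Rightarrow> 'a) topology" where
  "metric_aut_top M k P l F =
     subtopology (product_topology (\<lambda>_. top_of_set M) M) (metric_aut M k P l F)"

text \<open>A classical structure on universe N: relations R r of arity ra r and
  functions G s of arity fa s (constants = 0-ary functions).\<close>
definition classical_structure ::
  "'a set \<Rightarrow> ('r \<Rightarrow> nat) \<Rightarrow> ('r \<Rightarrow> 'a list \<Rightarrow> bool)
    \<Rightarrow> ('s \<Rightarrow> nat) \<Rightarrow> ('s \<Rightarrow> 'a list \<Rightarrow> 'a) \<Rightarrow> bool" where
  "classical_structure N ra R fa G \<longleftrightarrow> (\<forall>s. G s ` tuples N (fa s) \<subseteq> N)"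

definition struct_aut ::
  "'a set \<Rightarrow> ('r \<Rightarrow> nat) \<Rightarrow> ('r \<Rightarrow> 'a list \<Rightarrow> bool)
    \<Rightarrow> ('s \<Rightarrow> nat) \<Rightarrow> ('s \<Rightarrow> 'a list \<Rightarrow> 'a) \<Rightarrow> ('a \<Rightarrow> 'a) set" where
  "struct_aut N ra R fa G =
     {\<sigma> \<in> N \<rightarrow>\<^sub>E N. bij_betw \<sigma> N N \<and>
        (\<forall>r. \<forall>xs\<in>tuples N (ra r). R r (map \<sigma> xs) \<longleftrightarrow> R r xs) \<and>
        (\<forall>s. \<forall>xs\<in>tuples N (fa s). \<sigma> (G s xs) = G s (map \<sigma> xs))}"

definition struct_aut_top ::
  "'a set \<Rightarrow> ('r \<Rightarrow> nat) \<Rightarrow> ('r \<Rightarrow> 'a list \<Rightarrow> bool)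
    \<Rightarrow> ('s \<Rightarrow> nat) \<Rightarrow> ('s \<Rightarrow> 'a list \<Rightarrow> 'a) \<Rightarrow> ('a \<Rightarrow> 'a) topology" where
  "struct_aut_top N ra R fa G =
     subtopology (product_topology (\<lambda>_. discrete_topology N) N) (struct_aut N ra R fa G)"

text \<open>The (unique) automorphism of the metric structure extending sigma.\<close>
definition aut_ext :: "('a \<Rightarrow> 'a) set \<Rightarrow> 'a set \<Rightarrow> ('a \<Rightarrow> 'a) \<Rightarrow> ('a \<Rightarrow> 'a)" where
  "aut_ext AutM N \<sigma> = (THE g. g \<in> AutM \<and> (\<forall>x\<in>N. g x = \<sigma> x))"

definition countable_approx_sub ::
  "'a::metric_space set \<Rightarrow> ('i \<Rightarrow> nat) \<Rightarrow> ('i \<Rightarrow> 'a list \<Rightarrow> real)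
    \<Rightarrow> ('j \<Rightarrow> nat) \<Rightarrow> ('j \<Rightarrow> 'a list \<Rightarrow> 'a)
    \<Rightarrow> 'a set \<Rightarrow> ('r \<Rightarrow> nat) \<Rightarrow> ('r \<Rightarrow> 'a list \<Rightarrow> bool)
    \<Rightarrow> ('s \<Rightarrow> nat) \<Rightarrow> ('s \<Rightarrow> 'a list \<Rightarrow> 'a) \<Rightarrow> bool" where
  "countable_approx_sub M k P l F N ra R fa G \<longleftrightarrow>
     classical_structure N ra R fa G \<and>
     countable N \<and> N \<subseteq> M \<and> M \<subseteq> closure N \<and>
     (\<forall>\<sigma>\<in>struct_aut N ra R fa G. \<exists>g\<in>metric_aut M k P l F. \<forall>x\<in>N. g x = \<sigma> x) \<and>
     (metric_aut_top M k P l F) closure_of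
        (aut_ext (metric_aut M k P l F) N ` struct_aut N ra R fa G)
       = topspace (metric_aut_top M k P l F)"

end

theory Submission
  imports Defs
begin

text \<open>Automorphisms of M preserve the metric, hence are isometries, and two isometries
  that agree at y differ at x by at most 2 d(x, y). So the extension of an automorphism of N
  is unique, and a basic pointwise neighbourhood of an extension, which constrains its values
  at finitely many points up to \<open>\<epsilon>\<close>, contains the extension of every automorphism of N
  that agrees with the given one at finitely many points of N chosen \<open>\<epsilon>/2\<close>-close to the
  constrained points.\<close>

lemma metric_aut_isometry:
  assumes ms: "metric_structure M k P l F" and g: "g \<in> metric_aut M k P l F"
    and x: "x \<in> M" and y: "y \<in> M"
  shows "dist (g x) (g y) = dist x y"
proof -
  obtain i where i: "k i = 2" "\<forall>x\<in>M. \<forall>y\<in>M. P i [x, y] = dist x y"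
    using ms unfolding metric_structure_def by blast
  have gM: "g x \<in> M" "g y \<in> M"
    using g x y unfolding metric_aut_def by auto
  have "[x, y] \<in> tuples M (k i)"
    using i x y by (simp add: tuples_def)
  then have "P i (map g [x, y]) = P i [x, y]"
    using g unfolding metric_aut_def by blast
  then show ?thesis
    using i gM x y by simp
qed

lemma metric_aut_PiE: "g \<in> metric_aut M k P l F \<Longrightarrow> g \<in> M \<rightarrow>\<^sub>E M"
  unfolding metric_aut_def by blast

lemma dist_isometries_le:
  fixes f g :: "'a::metric_space \<Rightarrow> 'b::metric_space"
  assumes f: "\<forall>x\<in>M. \<forall>y\<in>M. dist (f x) (f y) = dist x y"
    and g: "\<forall>x\<in>M. \<forall>y\<in>M. dist (g x) (g y) = dist x y"
    and "x \<in> M" "y \<in> M" "f y = g y"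
  shows "dist (f x) (g x) \<le> 2 * dist x y"
proof -
  have "dist (f x) (g x) \<le> dist (f x) (f y) + dist (g y) (g x)"
    using \<open>f y = g y\<close> by (metis dist_triangle)
  also have "\<dots> = 2 * dist x y"
    using f g assms(3,4) by (simp add: dist_commute)
  finally show ?thesis .
qed

lemma isometries_eq_on_dense:
  fixes f g :: "'a::metric_space \<Rightarrow> 'a"
  assumes f: "f \<in> M \<rightarrow>\<^sub>E M" "\<forall>x\<in>M. \<forall>y\<in>M. dist (f x) (f y) = dist x y"
    and g: "g \<in> M \<rightarrow>\<^sub>E M" "\<forall>x\<in>M. \<forall>y\<in>M. dist (g x) (g y) = dist x y"
    and N: "N \<subseteq> M" "M \<subseteq> closure N"
    and agree: "\<forall>y\<in>N. f y = g y"
  shows "f = g"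
proof
  fix x
  show "f x = g x"
  proof (cases "x \<in> M")
    case False
    then show ?thesis
      using PiE_arb[OF f(1) False] PiE_arb[OF g(1) False] by simp
  next
    case x: True
    have "dist (f x) (g x) < e" if "e > 0" for e
    proof -
      have "x \<in> closure N"
        using x N by blast
      then obtain y where y: "y \<in> N" "dist y x < e / 2"
        using \<open>e > 0\<close> by (meson closure_approachable half_gt_zero)
      with N agree have "y \<in> M" "f y = g y"
        by auto
      then have "dist (f x) (g x) \<le> 2 * dist x y"
        by (rule dist_isometries_le[OF f(2) g(2) x])
      with y show ?thesis
        by (simp add: dist_commute)
    qed
    then show ?thesis
      by (metis dist_eq_0_iff dist_nz less_irrefl)
  qed
qed

lemma aut_ext_extends:
  assumes ms: "metric_structure M k P l F"
    and ca: "countable_approx_sub M k P l F N ra R fa G"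
    and \<sigma>: "\<sigma> \<in> struct_aut N ra R fa G"
  shows "aut_ext (metric_aut M k P l F) N \<sigma> \<in> metric_aut M k P l F"
    and "\<forall>x\<in>N. aut_ext (metric_aut M k P l F) N \<sigma> x = \<sigma> x"
proof -
  let ?A = "metric_aut M k P l F"
  have N: "N \<subseteq> M" "M \<subseteq> closure N"
    using ca unfolding countable_approx_sub_def by auto
  obtain g where g: "g \<in> ?A" "\<forall>x\<in>N. g x = \<sigma> x"
    using ca \<sigma> unfolding countable_approx_sub_def by blast
  have "h = g" if "h \<in> ?A" "\<forall>x\<in>N. h x = \<sigma> x" for h
    using that g
    by (intro isometries_eq_on_dense[OF _ _ _ _ N])
      (auto simp: metric_aut_PiE metric_aut_isometry[OF ms])
  with g have "\<exists>!g. g \<in> ?A \<and> (\<forall>x\<in>N. g x = \<sigma> x)"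
    by blast
  then have "aut_ext ?A N \<sigma> \<in> ?A \<and> (\<forall>x\<in>N. aut_ext ?A N \<sigma> x = \<sigma> x)"
    unfolding aut_ext_def by (rule theI')
  then show "aut_ext ?A N \<sigma> \<in> ?A" and "\<forall>x\<in>N. aut_ext ?A N \<sigma> x = \<sigma> x"
    by auto
qed

lemma pointwise_nhd_contains_agreeing_isometries:
  fixes g :: "'a::metric_space \<Rightarrow> 'a"
  assumes V: "openin (product_topology (\<lambda>_. top_of_set M) M) V" "g \<in> V"
    and g: "\<forall>x\<in>M. \<forall>y\<in>M. dist (g x) (g y) = dist x y"
    and N: "N \<subseteq> M" "M \<subseteq> closure N"
  shows "\<exists>Y. finite Y \<and> Y \<subseteq> N \<and> (\<forall>h \<in> M \<rightarrow>\<^sub>E M.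
           (\<forall>x\<in>M. \<forall>y\<in>M. dist (h x) (h y) = dist x y) \<longrightarrow> (\<forall>y\<in>Y. h y = g y) \<longrightarrow> h \<in> V)"
proof -
  obtain B where B: "finite {x \<in> M. B x \<noteq> M}" "\<forall>x\<in>M. openin (top_of_set M) (B x)"
      "g \<in> Pi\<^sub>E M B" "Pi\<^sub>E M B \<subseteq> V"
    using V unfolding openin_product_topology_alt by auto
  define X where "X = {x \<in> M. B x \<noteq> M}"
  have "\<exists>y\<in>N. \<forall>z\<in>M. dist z (g x) \<le> 2 * dist x y \<longrightarrow> z \<in> B x" if x: "x \<in> X" for x
  proof -
    have "x \<in> M" "g x \<in> B x"
      using x B(3) unfolding X_def by auto
    then obtain e where "e > 0" and e: "\<forall>z\<in>M. dist z (g x) < e \<longrightarrow> z \<in> B x"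
      using B(2) unfolding openin_euclidean_subtopology_iff by blast
    have "x \<in> closure N"
      using \<open>x \<in> M\<close> N by blast
    then obtain y where "y \<in> N" "dist y x < e / 2"
      using \<open>e > 0\<close> by (meson closure_approachable half_gt_zero)
    then have "2 * dist x y < e"
      by (simp add: dist_commute)
    with e have "\<forall>z\<in>M. dist z (g x) \<le> 2 * dist x y \<longrightarrow> z \<in> B x"
      by auto
    with \<open>y \<in> N\<close> show ?thesis
      by blast
  qed
  then obtain p where p: "\<And>x. x \<in> X \<Longrightarrow> p x \<in> N"
      "\<And>x z. x \<in> X \<Longrightarrow> z \<in> M \<Longrightarrow> dist z (g x) \<le> 2 * dist x (p x) \<Longrightarrow> z \<in> B x"
    by metis
  show ?thesis
  proof (intro exI conjI ballI impI)
    show "finite (p ` X)" "p ` X \<subseteq> N"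
      using B(1) p(1) unfolding X_def by auto
    fix h
    assume h: "h \<in> M \<rightarrow>\<^sub>E M" "\<forall>x\<in>M. \<forall>y\<in>M. dist (h x) (h y) = dist x y"
      and agree: "\<forall>y\<in>p ` X. h y = g y"
    have "h x \<in> B x" if x: "x \<in> M" for x
    proof (cases "x \<in> X")
      case False
      then show ?thesis
        using x PiE_mem[OF h(1) x] unfolding X_def by simp
    next
      case True
      with p(1) N agree have "p x \<in> M" "h (p x) = g (p x)"
        by auto
      then have "dist (h x) (g x) \<le> 2 * dist x (p x)"
        by (rule dist_isometries_le[OF h(2) g x])
      then show ?thesis
        by (rule p(2)[OF True PiE_mem[OF h(1) x]])
    qed
    then have "h \<in> Pi\<^sub>E M B"
      using PiE_arb[OF h(1)] by (rule PiE_I)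
    with B(4) show "h \<in> V"
      by blast
  qed
qed

lemma openin_product_discrete_agree_on_finite:
  assumes "finite Y" "Y \<subseteq> I"
  shows "openin (product_topology (\<lambda>_. discrete_topology B) I)
           {\<tau> \<in> I \<rightarrow>\<^sub>E B. \<forall>y\<in>Y. \<tau> y = \<sigma> y}"
proof -
  have "{\<tau> \<in> I \<rightarrow>\<^sub>E B. \<forall>y\<in>Y. \<tau> y = \<sigma> y} = Pi\<^sub>E I (\<lambda>i. if i \<in> Y then {\<sigma> i} \<inter> B else B)"
    using assms(2) by (auto simp: set_eq_iff PiE_iff)
  moreover have "finite {i \<in> I. (if i \<in> Y then {\<sigma> i} \<inter> B else B) \<noteq> B}"
    using assms(1) by (rule rev_finite_subset) auto
  ultimately show ?thesis
    by (simp add: openin_PiE_gen openin_discrete_topology)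
qed

lemma aut_ext_nhd_determined_on_finite:
  assumes ms: "metric_structure M k P l F"
    and ca: "countable_approx_sub M k P l F N ra R fa G"
    and V: "openin (product_topology (\<lambda>_. top_of_set M) M) V"
    and \<sigma>: "\<sigma> \<in> struct_aut N ra R fa G" "aut_ext (metric_aut M k P l F) N \<sigma> \<in> V"
  shows "\<exists>Y. finite Y \<and> Y \<subseteq> N \<and> (\<forall>\<tau> \<in> struct_aut N ra R fa G.
           (\<forall>y\<in>Y. \<tau> y = \<sigma> y) \<longrightarrow> aut_ext (metric_aut M k P l F) N \<tau> \<in> V)"
proof -
  let ?E = "aut_ext (metric_aut M k P l F) N"
  note ext = aut_ext_extends[OF ms ca]
  have N: "N \<subseteq> M" "M \<subseteq> closure N"
    using ca unfolding countable_approx_sub_def by auto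
  have iso: "\<forall>x\<in>M. \<forall>y\<in>M. dist (?E \<tau> x) (?E \<tau> y) = dist x y"
    if "\<tau> \<in> struct_aut N ra R fa G" for \<tau>
    using metric_aut_isometry[OF ms ext(1)[OF that]] by blast
  obtain Y where Y: "finite Y" "Y \<subseteq> N" and in_V: "\<forall>h \<in> M \<rightarrow>\<^sub>E M.
      (\<forall>x\<in>M. \<forall>y\<in>M. dist (h x) (h y) = dist x y) \<longrightarrow> (\<forall>y\<in>Y. h y = ?E \<sigma> y) \<longrightarrow> h \<in> V"
    using pointwise_nhd_contains_agreeing_isometries[OF V \<sigma>(2) iso[OF \<sigma>(1)] N]
    by (elim exE conjE)
  show ?thesis
  proof (intro exI conjI ballI impI)
    show "finite Y" "Y \<subseteq> N"
      by (fact Y)+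
    fix \<tau>
    assume \<tau>: "\<tau> \<in> struct_aut N ra R fa G" "\<forall>y\<in>Y. \<tau> y = \<sigma> y"
    have "\<forall>y\<in>Y. ?E \<tau> y = ?E \<sigma> y"
      using ext(2)[OF \<tau>(1)] ext(2)[OF \<sigma>(1)] \<tau>(2) Y(2) by (simp add: subset_eq)
    then show "?E \<tau> \<in> V"
      using in_V metric_aut_PiE[OF ext(1)[OF \<tau>(1)]] iso[OF \<tau>(1)] by blast
  qed
qed

theorem lemma5p5:
  fixes M :: "'a::metric_space set"
    and k :: "'i \<Rightarrow> nat" and P :: "'i \<Rightarrow> 'a list \<Rightarrow> real"
    and l :: "'j \<Rightarrow> nat" and F :: "'j \<Rightarrow> 'a list \<Rightarrow> 'a"
    and N :: "'a set"
    and ra :: "'r \<Rightarrow> nat" and R :: "'r \<Rightarrow> 'a list \<Rightarrow> bool"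
    and fa :: "'s \<Rightarrow> nat" and G :: "'s \<Rightarrow> 'a list \<Rightarrow> 'a"
    and U :: "('a \<Rightarrow> 'a) set"
  assumes "polish_metric_structure M k P l F"
    and "countable_approx_sub M k P l F N ra R fa G"
    and "openin (metric_aut_top M k P l F) U"
  shows "openin (struct_aut_top N ra R fa G)
           {\<sigma> \<in> struct_aut N ra R fa G. aut_ext (metric_aut M k P l F) N \<sigma> \<in> U}"
proof -
  let ?A = "metric_aut M k P l F" and ?S = "struct_aut N ra R fa G"
  let ?E = "aut_ext ?A N"
  have ms: "metric_structure M k P l F"
    using assms(1) unfolding polish_metric_structure_def by blast
  obtain V where V: "openin (product_topology (\<lambda>_. top_of_set M) M) V" "U = V \<inter> ?A"
    using assms(3) unfolding metric_aut_top_def openin_subtopology by blast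
  show ?thesis
    unfolding openin_subopen[of _ "{\<sigma> \<in> ?S. ?E \<sigma> \<in> U}"]
  proof
    fix \<sigma>
    assume "\<sigma> \<in> {\<sigma> \<in> ?S. ?E \<sigma> \<in> U}"
    then have \<sigma>: "\<sigma> \<in> ?S" "?E \<sigma> \<in> V"
      using V(2) by auto
    obtain Y where Y: "finite Y" "Y \<subseteq> N"
      and in_V: "\<forall>\<tau> \<in> ?S. (\<forall>y\<in>Y. \<tau> y = \<sigma> y) \<longrightarrow> ?E \<tau> \<in> V"
      using aut_ext_nhd_determined_on_finite[OF ms assms(2) V(1) \<sigma>] by (elim exE conjE)
    let ?W = "{\<tau> \<in> N \<rightarrow>\<^sub>E N. \<forall>y\<in>Y. \<tau> y = \<sigma> y} \<inter> ?S"
    have "openin (struct_aut_top N ra R fa G) ?W"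
      unfolding struct_aut_top_def openin_subtopology
      using openin_product_discrete_agree_on_finite[OF Y] by blast
    moreover have "\<sigma> \<in> ?W"
      using \<sigma>(1) unfolding struct_aut_def by blast
    moreover have "?W \<subseteq> {\<sigma> \<in> ?S. ?E \<sigma> \<in> U}"
      using in_V aut_ext_extends(1)[OF ms assms(2)] V(2) by blast
    ultimately show "\<exists>T. openin (struct_aut_top N ra R fa G) T \<and> \<sigma> \<in> T \<and>
        T \<subseteq> {\<sigma> \<in> ?S. ?E \<sigma> \<in> U}"
      by blast
  qed
qed

end
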